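(* Let $w_1,w_2,v_1,v_2\in\Sigma^*$ such that $\mathsf{Facs}(w_1)\cap\mathsf{Facs}(w_2)=\mathsf{Facs}(v_1)\cap\mathsf{Facs}(v_2)$, and let $r=\max\{|u| : u\in\mathsf{Facs}(w_1)\cap\mathsf{Facs}(w_2)\}$. If $w_1\equiv_{k+r+2} v_1$ and $w_2\equiv_{k+r+2} v_2$ for some $k\in\mathbb{N}$ with $k\ge 1$, then $w_1\cdot w_2\equiv_k v_1\cdot v_2$.
   Context: $\Sigma$ is a fixed finite alphabet. For $w \in \Sigma^*$, $\mathsf{Facs}(w)$ is the set of all factors (contiguous subwords, including $\varepsilon$ and $w$) of $w$. The structure $\mathfrak{A}_w$ representing $w$ has universe $\mathsf{Facs}(w)\cup\{\perp\}$, a ternary relation $R_\circ=\{(x,y,z)\in\mathsf{Facs}(w)^3 : x=y\cdot z\}$, for each letter $\mathtt{a}\in\Sigma$ a constant interpreted as $\mathtt{a}$ if $\mathtt{a}$ occurs in $w$ and as $\perp$ otherwise, and a constant $\varepsilon$ interpreted as the empty word. The $k$-round Ehrenfeucht–Fraïssé game on $\mathfrak{A}_w,\mathfrak{A}_v$: in each round $i$, Spoiler picks one of the two structures and an element of its universe, Duplicator answers with an element of the other structure's universe; let $a_i$ (in $\mathfrak{A}_w$) and $b_i$ (in $\mathfrak{A}_v$) be the chosen elements. Duplicator wins if the tuples $(a_1,\dots,a_k,\vec c^{\,\mathfrak{A}_w})$ and $(b_1,\dots,b_k,\vec c^{\,\mathfrak{A}_v})$, where $\vec c$ lists the interpretations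 of all constants, form a partial isomorphism: for all indices $i,j,l$, $a_i$ equals the interpretation of a constant $c$ iff $b_i$ equals the interpretation of $c$; $a_i=a_j$ iff $b_i=b_j$; and $a_i=a_j\cdot a_l$ iff $b_i=b_j\cdot b_l$. We write $w\equiv_k v$ if Duplicator has a winning strategy in the $k$-round game. *)

theory Defs
  imports Main "HOL-Library.Sublist"
begin

text \<open>Elements of the universe of the word structure are \<open>Some u\<close> with \<open>u\<close> a factor,
  and \<open>None\<close> representing \<open>\<bottom>\<close>.\<close>

definition Facs :: "'a list \<Rightarrow> 'a list set" where
  "Facs w = {u. sublist u w}"

definition univ :: "'a list \<Rightarrow> 'a list option set" where
  "univ w = Some ` Facs w \<union> {None}"

definition letter_const :: "'a list \<Rightarrow> 'a \<Rightarrow> 'a list option" where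
  "letter_const w a = (if a \<in> set w then Some [a] else None)"

definition Rcat :: "'a list option \<Rightarrow> 'a list option \<Rightarrow> 'a list option \<Rightarrow> bool" where
  "Rcat x y z = (\<exists>x' y' z'. x = Some x' \<and> y = Some y' \<and> z = Some z' \<and> x' = y' @ z')"

text \<open>Positions of the extended tuple \<open>(a\<^sub>1,\<dots>,a\<^sub>k, constants)\<close>.\<close>
datatype 'a pos = Chosen nat | Letter 'a | Eps

fun pval :: "'a list \<Rightarrow> 'a list option list \<Rightarrow> 'a pos \<Rightarrow> 'a list option" where
  "pval w as (Chosen i) = as ! i"
| "pval w as (Letter a) = letter_const w a"
| "pval w as Eps = Some []"

fun valid_pos :: "nat \<Rightarrow> 'a pos \<Rightarrow> bool" where
  "valid_pos n (Chosen i) = (i < n)"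
| "valid_pos n _ = True"

definition partial_iso ::
  "'a list \<Rightarrow> 'a list \<Rightarrow> 'a list option list \<Rightarrow> 'a list option list \<Rightarrow> bool" where
  "partial_iso w v as bs \<longleftrightarrow> length as = length bs \<and>
     (\<forall>i j l. valid_pos (length as) i \<and> valid_pos (length as) j \<and> valid_pos (length as) l \<longrightarrow>
        (pval w as i = pval w as j \<longleftrightarrow> pval v bs i = pval v bs j) \<and>
        (Rcat (pval w as i) (pval w as j) (pval w as l) \<longleftrightarrow>
         Rcat (pval v bs i) (pval v bs j) (pval v bs l)))"

fun dup_wins :: "nat \<Rightarrow> 'a list \<Rightarrow> 'a list \<Rightarrow> 'a list option list \<Rightarrow> 'a list option list \<Rightarrow> bool" where
  "dup_wins 0 w v as bs = partial_iso w v as bs"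
| "dup_wins (Suc n) w v as bs =
     ((\<forall>a\<in>univ w. \<exists>b\<in>univ v. dup_wins n w v (as @ [a]) (bs @ [b])) \<and>
      (\<forall>b\<in>univ v. \<exists>a\<in>univ w. dup_wins n w v (as @ [a]) (bs @ [b])))"

definition ef_equiv :: "'a list \<Rightarrow> nat \<Rightarrow> 'a list \<Rightarrow> bool" ("_ \<equiv>\<^sub>_ _" [51, 0, 51] 50) where
  "ef_equiv w k v \<longleftrightarrow> dup_wins k w v [] []"

end

theory Submission
  imports Defs
begin

text \<open>Duplicator plays the games on \<open>(w1, v1)\<close> and \<open>(w2, v2)\<close> in parallel.  A factor of
  \<open>w1 @ w2\<close> is a factor of \<open>w1\<close>, a factor of \<open>w2\<close>, or crosses the border as \<open>s @ p\<close> with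
  \<open>s\<close> a suffix of \<open>w1\<close> and \<open>p\<close> a prefix of \<open>w2\<close>; in the last case \<open>s\<close> and \<open>p\<close> are played
  separately in the two games and the answer is \<open>s' @ p'\<close>.  Factors common to \<open>w1\<close> and
  \<open>w2\<close> have length at most \<open>r\<close> and are definable with \<open>r\<close> quantifiers, so they must be
  answered by themselves; the whole word is definable as well, so suffixes are answered by
  suffixes and prefixes by prefixes.  Hence every answer is of the same kind as the move, and
  equalities and concatenations between pebbles, which can mix the two games only along a
  common factor, are preserved.  The \<open>r + 2\<close> extra rounds pay for these auxiliary moves.\<close>

section \<open>The single-word game\<close>

lemma valid_pos_Suc [simp]: "valid_pos n q \<Longrightarrow> valid_pos (Suc n) q"
  by (cases q) auto

lemma valid_pos_append: "valid_pos (length A) q \<Longrightarrow> valid_pos (length (A @ X)) q"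
  by (cases q) auto

lemma pval_append: "valid_pos (length A) q \<Longrightarrow> pval w (A @ X) q = pval w A q"
  by (cases q) (auto simp: nth_append)

lemma None_in_univ [simp]: "None \<in> univ w"
  by (simp add: univ_def)

lemma Some_in_univ_iff [simp]: "Some u \<in> univ w \<longleftrightarrow> sublist u w"
  by (auto simp: univ_def Facs_def)

lemma in_univ_cases: "b \<in> univ v \<Longrightarrow> b = None \<or> (\<exists>u. b = Some u \<and> sublist u v)"
  by (auto simp: univ_def Facs_def)

lemma letter_const_in_set: "c \<in> set w \<Longrightarrow> letter_const w c = Some [c]"
  by (simp add: letter_const_def)

lemma sublist_singleton_iff: "sublist [c] w \<longleftrightarrow> c \<in> set w"
  by (metis in_set_conv_decomp sublist_def append_Cons append_Nil set_mono_sublist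
      insert_subset list.set(2))

lemma sublist_appendD1: "sublist (xs @ ys) zs \<Longrightarrow> sublist xs zs"
  using sublist_order.order_trans sublist_append_rightI by blast

lemma sublist_appendD2: "sublist (xs @ ys) zs \<Longrightarrow> sublist ys zs"
  using sublist_order.order_trans sublist_append_leftI by blast

lemma partial_iso_butlast:
  assumes iso: "partial_iso w v (A @ [a]) (B @ [b])"
  shows "partial_iso w v A B"
proof -
  have len: "length A = length B"
    using iso by (simp add: partial_iso_def)
  let ?A = "A @ [a]" and ?B = "B @ [b]"
  have "(pval w A i = pval w A j \<longleftrightarrow> pval v B i = pval v B j) \<and>
      (Rcat (pval w A i) (pval w A j) (pval w A l) \<longleftrightarrow> Rcat (pval v B i) (pval v B j) (pval v B l))"
    if valid: "valid_pos (length A) i \<and> valid_pos (length A) j \<and> valid_pos (length A) l"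
    for i j l :: "'a pos"
  proof -
    have "valid_pos (length ?A) i \<and> valid_pos (length ?A) j \<and> valid_pos (length ?A) l"
      using valid by simp
    then have "(pval w ?A i = pval w ?A j \<longleftrightarrow> pval v ?B i = pval v ?B j) \<and>
        (Rcat (pval w ?A i) (pval w ?A j) (pval w ?A l) \<longleftrightarrow> Rcat (pval v ?B i) (pval v ?B j) (pval v ?B l))"
      using iso unfolding partial_iso_def by blast
    then show ?thesis
      using valid len by (simp add: pval_append)
  qed
  with len show ?thesis
    unfolding partial_iso_def by blast
qed

lemma dup_wins_SucI:
  "\<lbrakk>\<forall>a\<in>univ w. \<exists>b\<in>univ v. dup_wins n w v (A @ [a]) (B @ [b]);
    \<forall>b\<in>univ v. \<exists>a\<in>univ w. dup_wins n w v (A @ [a]) (B @ [b])\<rbrakk> \<Longrightarrow> dup_wins (Suc n) w v A B"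
  by simp

lemma dup_wins_Suc_left:
  "dup_wins (Suc n) w v A B \<Longrightarrow> a \<in> univ w \<Longrightarrow> \<exists>b\<in>univ v. dup_wins n w v (A @ [a]) (B @ [b])"
  by simp

lemma dup_wins_Suc_right:
  "dup_wins (Suc n) w v A B \<Longrightarrow> b \<in> univ v \<Longrightarrow> \<exists>a\<in>univ w. dup_wins n w v (A @ [a]) (B @ [b])"
  by simp

declare dup_wins.simps(2) [simp del]

lemma dup_wins_partial_iso: "dup_wins n w v A B \<Longrightarrow> partial_iso w v A B"
proof (induction n arbitrary: A B)
  case (Suc n)
  then obtain b where "dup_wins n w v (A @ [None]) (B @ [b])"
    using dup_wins_Suc_left None_in_univ by blast
  with Suc.IH show ?case
    using partial_iso_butlast by blast
qed simp

lemma dup_wins_length: "dup_wins n w v A B \<Longrightarrow> length A = length B"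
  using dup_wins_partial_iso unfolding partial_iso_def by blast

lemma partial_iso_sym: "partial_iso w v A B \<Longrightarrow> partial_iso v w B A"
  unfolding partial_iso_def by metis

lemma dup_wins_sym: "dup_wins n w v A B \<Longrightarrow> dup_wins n v w B A"
proof (induction n arbitrary: A B)
  case 0
  then show ?case by (simp add: partial_iso_sym)
next
  case (Suc n)
  show ?case
    using Suc.prems Suc.IH by (metis dup_wins_SucI dup_wins_Suc_left dup_wins_Suc_right)
qed

lemma partial_iso_eq_iff:
  "partial_iso w v A B \<Longrightarrow> valid_pos (length A) q \<Longrightarrow> valid_pos (length A) q' \<Longrightarrow>
    pval w A q = pval w A q' \<longleftrightarrow> pval v B q = pval v B q'"
  unfolding partial_iso_def by blast

text \<open>\<open>\<bottom>\<close> is definable: it is the only element \<open>x\<close> with \<open>\<not> R\<^sub>\<circ>(x, x, \<epsilon>)\<close>.\<close>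

lemma partial_iso_not_None:
  assumes iso: "partial_iso w v A B" and q: "valid_pos (length A) q" and "pval w A q \<noteq> None"
  shows "pval v B q \<noteq> None"
proof -
  have "Rcat (pval w A q) (pval w A q) (pval w A Eps)"
    using assms(3) by (auto simp: Rcat_def)
  then have "Rcat (pval v B q) (pval v B q) (pval v B Eps)"
    using iso q unfolding partial_iso_def by (metis valid_pos.simps(3))
  then show ?thesis
    by (auto simp: Rcat_def)
qed

lemma partial_iso_concat:
  assumes iso: "partial_iso w v A B"
    and "valid_pos (length A) q1" "valid_pos (length A) q2" "valid_pos (length A) q3"
    and "pval w A q1 = Some (b @ c)" "pval w A q2 = Some b" "pval w A q3 = Some c"
  shows "\<exists>b' c'. pval v B q2 = Some b' \<and> pval v B q3 = Some c' \<and> pval v B q1 = Some (b' @ c')"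
proof -
  have "Rcat (pval w A q1) (pval w A q2) (pval w A q3)"
    using assms(5-7) by (simp add: Rcat_def)
  then have "Rcat (pval v B q1) (pval v B q2) (pval v B q3)"
    using iso assms(2-4) unfolding partial_iso_def by blast
  then show ?thesis
    by (auto simp: Rcat_def)
qed

lemma dup_wins_concat:
  "dup_wins n w v A B \<Longrightarrow>
    valid_pos (length A) q1 \<Longrightarrow> valid_pos (length A) q2 \<Longrightarrow> valid_pos (length A) q3 \<Longrightarrow>
    pval w A q1 = Some (b @ c) \<Longrightarrow> pval w A q2 = Some b \<Longrightarrow> pval w A q3 = Some c \<Longrightarrow>
    pval v B q2 = Some b' \<Longrightarrow> pval v B q3 = Some c' \<Longrightarrow> pval v B q1 = Some (b' @ c')"
  using partial_iso_concat[OF dup_wins_partial_iso, of n w v A B q1 q2 q3 b c] by auto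

lemma dup_wins_letter_iff: "dup_wins n w v A B \<Longrightarrow> c \<in> set w \<longleftrightarrow> c \<in> set v"
  using partial_iso_not_None[OF dup_wins_partial_iso, of n w v A B "Letter c"]
    partial_iso_not_None[OF dup_wins_partial_iso[OF dup_wins_sym], of n w v A B "Letter c"]
  by (auto simp: letter_const_def split: if_splits)

section \<open>Factors that Duplicator must answer rigidly\<close>

text \<open>A factor of length at most \<open>j + 1\<close> is definable with \<open>j\<close> quantifiers from the letter
  constants: \<open>c # t\<close> is the unique concatenation of the constant \<open>c\<close> with the factor \<open>t\<close>.\<close>

lemma dup_wins_short_factor:
  "dup_wins j w v A B \<Longrightarrow> valid_pos (length A) q \<Longrightarrow> pval w A q = Some t \<Longrightarrow> sublist t w \<Longrightarrow>
    length t \<le> Suc j \<Longrightarrow> pval v B q = Some t"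
proof (induction t arbitrary: j A B q)
  case Nil
  then have "pval v B q = pval v B Eps"
    using partial_iso_eq_iff[OF dup_wins_partial_iso, of j w v A B q Eps] by simp
  then show ?case
    by simp
next
  case (Cons c t)
  have len: "length A = length B"
    using Cons.prems(1) by (rule dup_wins_length)
  have c: "c \<in> set w"
    using Cons.prems(4) set_mono_sublist by fastforce
  have letter: "pval w A (Letter c) = Some [c]" "pval v B (Letter c) = Some [c]"
    using c dup_wins_letter_iff[OF Cons.prems(1)] by (simp_all add: letter_const_in_set)
  show ?case
  proof (cases "t = []")
    case True
    then show ?thesis
      using Cons.prems partial_iso_eq_iff[OF dup_wins_partial_iso, of j w v A B q "Letter c"] letter
      by simp
  next
    case False
    then obtain j' where j: "j = Suc j'"
      using Cons.prems(5) by (cases j) auto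
    have t: "sublist t w"
      using Cons.prems(4) sublist_appendD2[of "[c]" t] by simp
    obtain b where "b \<in> univ v" and game: "dup_wins j' w v (A @ [Some t]) (B @ [b])"
      using Cons.prems(1) j t dup_wins_Suc_left by (metis Some_in_univ_iff)
    have "pval v (B @ [b]) (Chosen (length A)) = Some t"
      using Cons.IH[OF game, of "Chosen (length A)"] t Cons.prems(5) j by simp
    then have b: "b = Some t"
      using len by simp
    have "pval v (B @ [b]) q = Some ([c] @ t)"
      by (rule dup_wins_concat[OF game, of q "Letter c" "Chosen (length A)" "[c]" t])
        (use Cons.prems(2,3) letter len b in \<open>simp_all add: pval_append valid_pos_append nth_append\<close>)
    then show ?thesis
      using Cons.prems(2) len by (simp add: pval_append)
  qed
qed

lemma dup_wins_short_factor_sym: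
  "dup_wins j w v A B \<Longrightarrow> valid_pos (length A) q \<Longrightarrow> pval v B q = Some t \<Longrightarrow> sublist t v \<Longrightarrow>
    length t \<le> Suc j \<Longrightarrow> pval w A q = Some t"
  using dup_wins_short_factor[OF dup_wins_sym] dup_wins_length by metis

lemma dup_wins_pick_short_factor:
  assumes game: "dup_wins (Suc n) w v A B" and "sublist t w" "length t \<le> Suc n"
  shows "dup_wins n w v (A @ [Some t]) (B @ [Some t])"
proof -
  obtain b where b: "dup_wins n w v (A @ [Some t]) (B @ [b])"
    using game assms(2) dup_wins_Suc_left by (metis Some_in_univ_iff)
  moreover have "length A = length B"
    using game by (rule dup_wins_length)
  ultimately have "b = Some t"
    using dup_wins_short_factor[OF b, of "Chosen (length A)" t] assms(2,3) by (simp add: nth_append)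
  with b show ?thesis
    by simp
qed

lemma dup_wins_pick_factor:
  assumes game: "dup_wins (Suc n) w v A B" and "sublist u w"
  shows "\<exists>u'. sublist u' v \<and> dup_wins n w v (A @ [Some u]) (B @ [Some u'])"
proof -
  obtain b where "b \<in> univ v" and b: "dup_wins n w v (A @ [Some u]) (B @ [b])"
    using game assms(2) dup_wins_Suc_left by (metis Some_in_univ_iff)
  moreover have "length A = length B"
    using game by (rule dup_wins_length)
  ultimately have "b \<noteq> None"
    using partial_iso_not_None[OF dup_wins_partial_iso[OF b], of "Chosen (length A)"]
    by (simp add: nth_append)
  with \<open>b \<in> univ v\<close> b show ?thesis
    using in_univ_cases by blast
qed

lemma sublist_extend:
  assumes "sublist u w" "u \<noteq> w"
  shows "\<exists>c. sublist (u @ [c]) w \<or> sublist (c # u) w"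
proof -
  obtain ps ss where w: "w = ps @ u @ ss"
    using assms(1) by (auto simp: sublist_def)
  show ?thesis
  proof (cases ss)
    case (Cons c ss')
    then have "w = ps @ (u @ [c]) @ ss'"
      using w by simp
    then show ?thesis
      unfolding sublist_def by blast
  next
    case Nil
    then have "ps \<noteq> []"
      using w assms(2) by auto
    then have "w = butlast ps @ (last ps # u) @ ss"
      using w by simp
    then show ?thesis
      unfolding sublist_def by blast
  qed
qed

lemma dup_wins_factor_concat:
  assumes game: "dup_wins (Suc j) w v A B"
    and q: "valid_pos (length A) qx" "valid_pos (length A) qy"
    and xy: "pval w A qx = Some x" "pval w A qy = Some y" "sublist (x @ y) w"
  shows "\<exists>x' y'. pval v B qx = Some x' \<and> pval v B qy = Some y' \<and> sublist (x' @ y') v"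
proof -
  have len: "length A = length B"
    using game by (rule dup_wins_length)
  obtain z where z: "sublist z v" and game': "dup_wins j w v (A @ [Some (x @ y)]) (B @ [Some z])"
    using dup_wins_pick_factor[OF game xy(3)] by blast
  have "\<exists>x' y'. pval v (B @ [Some z]) qx = Some x' \<and> pval v (B @ [Some z]) qy = Some y' \<and>
      pval v (B @ [Some z]) (Chosen (length A)) = Some (x' @ y')"
    by (rule partial_iso_concat[OF dup_wins_partial_iso[OF game']])
      (use q xy in \<open>simp_all add: pval_append valid_pos_append nth_append\<close>)
  with z q len show ?thesis
    by (auto simp: pval_append nth_append)
qed

text \<open>The whole word is definable with two quantifiers: it is the factor that cannot be extended
  by a letter on either side.\<close>

lemma dup_wins_pick_whole_word:
  assumes game: "dup_wins (Suc (Suc j)) w v A B"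
  shows "dup_wins (Suc j) w v (A @ [Some w]) (B @ [Some v])"
proof -
  have len: "length A = length B"
    using game by (rule dup_wins_length)
  obtain a where "a \<in> univ w" and game': "dup_wins (Suc j) w v (A @ [a]) (B @ [Some v])"
    using dup_wins_Suc_right[OF game, of "Some v"] by auto
  have "pval w (A @ [a]) (Chosen (length A)) \<noteq> None"
    using partial_iso_not_None[OF partial_iso_sym[OF dup_wins_partial_iso[OF game']],
        of "Chosen (length B)"] len by (simp add: nth_append)
  then obtain u where a: "a = Some u" and u: "sublist u w"
    using \<open>a \<in> univ w\<close> in_univ_cases by force
  let ?A = "A @ [a]" and ?B = "B @ [Some v]" and ?q = "Chosen (length A)"
  have word: "pval w ?A ?q = Some u" "pval v ?B ?q = Some v" "valid_pos (length ?A) ?q"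
    using a len by (simp_all add: nth_append)
  have "u = w"
  proof (rule ccontr)
    assume "u \<noteq> w"
    then obtain c where "sublist (u @ [c]) w \<or> sublist ([c] @ u) w"
      using sublist_extend[OF u] by auto
    moreover have "c \<in> set w" "c \<in> set v" if "sublist (u @ [c]) w \<or> sublist ([c] @ u) w"
      using that set_mono_sublist dup_wins_letter_iff[OF game] by fastforce+
    ultimately have "sublist (v @ [c]) v \<or> sublist ([c] @ v) v"
      using dup_wins_factor_concat[OF game', of ?q "Letter c" u "[c]"]
        dup_wins_factor_concat[OF game', of "Letter c" ?q "[c]" u] word
      by (auto simp: letter_const_in_set nth_append)
    then show False
      using sublist_length_le by fastforce
  qed
  with game' a show ?thesis
    by simp
qed

lemma dup_wins_suffix:
  assumes game: "dup_wins (Suc (Suc j)) w v A B" and q: "valid_pos (length A) q"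
    and s: "pval w A q = Some s" "suffix s w"
  shows "\<exists>s'. pval v B q = Some s' \<and> suffix s' v"
proof -
  have len: "length A = length B"
    using game by (rule dup_wins_length)
  obtain z where w: "w = z @ s"
    using s(2) by (auto simp: suffix_def)
  obtain z' where game': "dup_wins j w v (A @ [Some w, Some z]) (B @ [Some v, Some z'])"
    using dup_wins_pick_factor[OF dup_wins_pick_whole_word[OF game], of z] w by auto
  have "\<exists>z'' s'. pval v (B @ [Some v, Some z']) (Chosen (Suc (length A))) = Some z'' \<and>
      pval v (B @ [Some v, Some z']) q = Some s' \<and>
      pval v (B @ [Some v, Some z']) (Chosen (length A)) = Some (z'' @ s')"
    by (rule partial_iso_concat[OF dup_wins_partial_iso[OF game']])
      (use q s w valid_pos_append[OF q] in \<open>auto simp: nth_append pval_append\<close>)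
  then show ?thesis
    using q len by (auto simp: nth_append pval_append suffix_def)
qed

lemma dup_wins_prefix:
  assumes game: "dup_wins (Suc (Suc j)) w v A B" and q: "valid_pos (length A) q"
    and p: "pval w A q = Some p" "prefix p w"
  shows "\<exists>p'. pval v B q = Some p' \<and> prefix p' v"
proof -
  have len: "length A = length B"
    using game by (rule dup_wins_length)
  obtain z where w: "w = p @ z"
    using p(2) by (auto simp: prefix_def)
  obtain z' where game': "dup_wins j w v (A @ [Some w, Some z]) (B @ [Some v, Some z'])"
    using dup_wins_pick_factor[OF dup_wins_pick_whole_word[OF game], of z] w by auto
  have "\<exists>p' z''. pval v (B @ [Some v, Some z']) q = Some p' \<and>
      pval v (B @ [Some v, Some z']) (Chosen (Suc (length A))) = Some z'' \<and>
      pval v (B @ [Some v, Some z']) (Chosen (length A)) = Some (p' @ z'')"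
    by (rule partial_iso_concat[OF dup_wins_partial_iso[OF game']])
      (use q p w valid_pos_append[OF q] in \<open>auto simp: nth_append pval_append\<close>)
  then show ?thesis
    using q len by (auto simp: nth_append pval_append prefix_def)
qed

section \<open>Concatenations with a short factor\<close>

text \<open>Each lemma below lets Spoiler pick the short factor \<open>t\<close> first; it is answered by itself
  and thereafter serves as an additional constant.\<close>

lemma dup_wins_append_short_factor:
  assumes game: "dup_wins (Suc n) w v A B" and t: "sublist t w" "length t \<le> Suc n"
    and q: "valid_pos (length A) qa" "valid_pos (length A) qb"
    and "pval w A qa = Some (b @ t)" "pval w A qb = Some b" "pval v B qb = Some b'"
  shows "pval v B qa = Some (b' @ t)"
proof -
  have len: "length A = length B"
    using game by (rule dup_wins_length)
  have "pval v (B @ [Some t]) qa = Some (b' @ t)"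
    by (rule dup_wins_concat[OF dup_wins_pick_short_factor[OF game t], of qa qb "Chosen (length A)"])
      (use assms len in \<open>simp_all add: pval_append nth_append\<close>)
  then show ?thesis
    using q len by (simp add: pval_append)
qed

lemma dup_wins_prepend_short_factor:
  assumes game: "dup_wins (Suc n) w v A B" and t: "sublist t w" "length t \<le> Suc n"
    and q: "valid_pos (length A) qa" "valid_pos (length A) qb"
    and "pval w A qa = Some (t @ b)" "pval w A qb = Some b" "pval v B qb = Some b'"
  shows "pval v B qa = Some (t @ b')"
proof -
  have len: "length A = length B"
    using game by (rule dup_wins_length)
  have "pval v (B @ [Some t]) qa = Some (t @ b')"
    by (rule dup_wins_concat[OF dup_wins_pick_short_factor[OF game t], of qa "Chosen (length A)" qb])
      (use assms len in \<open>simp_all add: pval_append nth_append\<close>)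
  then show ?thesis
    using q len by (simp add: pval_append)
qed

lemma dup_wins_factor_append_short_factor:
  assumes game: "dup_wins (Suc (Suc n)) w v A B" and t: "sublist t w" "length t \<le> Suc (Suc n)"
    and q: "valid_pos (length A) q" and "pval w A q = Some s" "pval v B q = Some s'"
    and "sublist (s @ t) w"
  shows "sublist (s' @ t) v"
proof -
  have len: "length A = length B"
    using game by (rule dup_wins_length)
  show ?thesis
    using dup_wins_factor_concat[OF dup_wins_pick_short_factor[OF game t], of q "Chosen (length A)" s t]
      assms len by (auto simp: pval_append nth_append valid_pos_append)
qed

lemma dup_wins_factor_prepend_short_factor:
  assumes game: "dup_wins (Suc (Suc n)) w v A B" and t: "sublist t w" "length t \<le> Suc (Suc n)"
    and q: "valid_pos (length A) q" and "pval w A q = Some p" "pval v B q = Some p'"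
    and "sublist (t @ p) w"
  shows "sublist (t @ p') v"
proof -
  have len: "length A = length B"
    using game by (rule dup_wins_length)
  show ?thesis
    using dup_wins_factor_concat[OF dup_wins_pick_short_factor[OF game t], of "Chosen (length A)" q t p]
      assms len by (auto simp: pval_append nth_append valid_pos_append)
qed

lemma dup_wins_overlap_short_right:
  assumes game: "dup_wins (Suc (Suc n)) w v A B" and t: "sublist t w" "length t \<le> Suc (Suc n)"
    and m: "sublist m w"
    and q: "valid_pos (length A) qs" "valid_pos (length A) qa" "valid_pos (length A) ql"
    and "pval w A qs = Some (a @ m)" "pval w A qa = Some a" "pval w A ql = Some (m @ t)"
    and "pval v B qa = Some a'"
  shows "\<exists>m'. pval v B qs = Some (a' @ m') \<and> pval v B ql = Some (m' @ t)"
proof -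
  have len: "length A = length B"
    using game by (rule dup_wins_length)
  obtain m' where game': "dup_wins n w v (A @ [Some t, Some m]) (B @ [Some t, Some m'])"
    using dup_wins_pick_factor[OF dup_wins_pick_short_factor[OF game t] m] by auto
  have "pval v (B @ [Some t, Some m']) qs = Some (a' @ m')"
    by (rule dup_wins_concat[OF game', of qs qa "Chosen (Suc (length A))"])
      (use assms len in \<open>simp_all add: pval_append nth_append\<close>)
  moreover have "pval v (B @ [Some t, Some m']) ql = Some (m' @ t)"
    by (rule dup_wins_concat[OF game', of ql "Chosen (Suc (length A))" "Chosen (length A)"])
      (use assms len in \<open>simp_all add: pval_append nth_append\<close>)
  ultimately show ?thesis
    using q len by (auto simp: pval_append)
qed

lemma dup_wins_overlap_short_left:
  assumes game: "dup_wins (Suc (Suc n)) w v A B" and t: "sublist t w" "length t \<le> Suc (Suc n)"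
    and m: "sublist m w"
    and q: "valid_pos (length A) qx" "valid_pos (length A) qy" "valid_pos (length A) qc"
    and "pval w A qx = Some (t @ m)" "pval w A qy = Some (m @ c)" "pval w A qc = Some c"
    and "pval v B qc = Some c'"
  shows "\<exists>m'. pval v B qx = Some (t @ m') \<and> pval v B qy = Some (m' @ c')"
proof -
  have len: "length A = length B"
    using game by (rule dup_wins_length)
  obtain m' where game': "dup_wins n w v (A @ [Some t, Some m]) (B @ [Some t, Some m'])"
    using dup_wins_pick_factor[OF dup_wins_pick_short_factor[OF game t] m] by auto
  have "pval v (B @ [Some t, Some m']) qx = Some (t @ m')"
    by (rule dup_wins_concat[OF game', of qx "Chosen (length A)" "Chosen (Suc (length A))"])
      (use assms len in \<open>simp_all add: pval_append nth_append\<close>)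
  moreover have "pval v (B @ [Some t, Some m']) qy = Some (m' @ c')"
    by (rule dup_wins_concat[OF game', of qy "Chosen (Suc (length A))" qc])
      (use assms len in \<open>simp_all add: pval_append nth_append\<close>)
  ultimately show ?thesis
    using q len by (auto simp: pval_append)
qed

lemma dup_wins_concat_append_short_factor:
  assumes game: "dup_wins (Suc (Suc n)) w v A B" and t: "sublist t w" "length t \<le> Suc (Suc n)"
    and m: "sublist (m @ t) w"
    and q: "valid_pos (length A) qs" "valid_pos (length A) qa" "valid_pos (length A) qm"
    and "pval w A qs = Some (a @ m @ t)" "pval w A qa = Some a" "pval w A qm = Some m"
    and "pval v B qa = Some a'" "pval v B qm = Some m'"
  shows "pval v B qs = Some (a' @ m' @ t)"
proof -
  have len: "length A = length B"
    using game by (rule dup_wins_length)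
  obtain z where game': "dup_wins n w v (A @ [Some t, Some (m @ t)]) (B @ [Some t, Some z])"
    using dup_wins_pick_factor[OF dup_wins_pick_short_factor[OF game t] m] by auto
  have "pval v (B @ [Some t, Some z]) (Chosen (Suc (length A))) = Some (m' @ t)"
    by (rule dup_wins_concat[OF game', of _ qm "Chosen (length A)"])
      (use assms len in \<open>simp_all add: pval_append nth_append\<close>)
  moreover have "pval v (B @ [Some t, Some z]) qs = Some (a' @ z)"
    by (rule dup_wins_concat[OF game', of qs qa "Chosen (Suc (length A))"])
      (use assms len in \<open>simp_all add: pval_append nth_append\<close>)
  ultimately show ?thesis
    using q len by (simp add: pval_append nth_append)
qed

lemma dup_wins_concat_prepend_short_factor:
  assumes game: "dup_wins (Suc (Suc n)) w v A B" and t: "sublist t w" "length t \<le> Suc (Suc n)"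
    and m: "sublist (t @ m) w"
    and q: "valid_pos (length A) qs" "valid_pos (length A) qm" "valid_pos (length A) qb"
    and "pval w A qs = Some ((t @ m) @ b)" "pval w A qm = Some m" "pval w A qb = Some b"
    and "pval v B qm = Some m'" "pval v B qb = Some b'"
  shows "pval v B qs = Some ((t @ m') @ b')"
proof -
  have len: "length A = length B"
    using game by (rule dup_wins_length)
  obtain z where game': "dup_wins n w v (A @ [Some t, Some (t @ m)]) (B @ [Some t, Some z])"
    using dup_wins_pick_factor[OF dup_wins_pick_short_factor[OF game t] m] by auto
  have "pval v (B @ [Some t, Some z]) (Chosen (Suc (length A))) = Some (t @ m')"
    by (rule dup_wins_concat[OF game', of _ "Chosen (length A)" qm])
      (use assms len in \<open>simp_all add: pval_append nth_append\<close>)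
  moreover have "pval v (B @ [Some t, Some z]) qs = Some (z @ b')"
    by (rule dup_wins_concat[OF game', of qs "Chosen (Suc (length A))" qb])
      (use assms len in \<open>simp_all add: pval_append nth_append\<close>)
  ultimately show ?thesis
    using q len by (simp add: pval_append nth_append)
qed

section \<open>Playing the two component games in parallel\<close>

locale concat_games =
  fixes w1 w2 v1 v2 :: "'a list" and r :: nat
  assumes same_common_factors: "\<And>u. sublist u w1 \<and> sublist u w2 \<longleftrightarrow> sublist u v1 \<and> sublist u v2"
    and common_factor_length: "\<And>u. sublist u w1 \<Longrightarrow> sublist u w2 \<Longrightarrow> length u \<le> r"
begin

lemma swap: "concat_games v1 v2 w1 w2 r"
  using same_common_factors common_factor_length by unfold_locales blast+

text \<open>How a pebble \<open>x\<close> on \<open>w1 @ w2\<close> and its answer \<open>y\<close> on \<open>v1 @ v2\<close> are represented in the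
  positions \<open>(A1, B1)\<close> and \<open>(A2, B2)\<close> of the component games: a factor of only one component
  is kept at position \<open>q1\<close> resp. \<open>q2\<close> of that game, a common factor at both (it is short, hence
  answered by itself), and a crossing factor \<open>s @ p\<close> (\<open>s\<close> a suffix of \<open>w1\<close>, \<open>p\<close> a prefix of
  \<open>w2\<close>) is split, with \<open>s\<close> kept in the first and \<open>p\<close> in the second game.\<close>

definition tracked ::
  "'a list option list \<Rightarrow> 'a list option list \<Rightarrow> 'a list option list \<Rightarrow> 'a list option list \<Rightarrow>
   'a list option \<Rightarrow> 'a list option \<Rightarrow> 'a pos \<Rightarrow> 'a pos \<Rightarrow> bool" where
  "tracked A1 B1 A2 B2 x y q1 q2 \<longleftrightarrow> valid_pos (length A1) q1 \<and> valid_pos (length A2) q2 \<and>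
    (x = None \<and> y = None \<or>
     (\<exists>u. x = Some u \<and> y = Some u \<and> sublist u w1 \<and> sublist u w2 \<and>
        pval w1 A1 q1 = x \<and> pval v1 B1 q1 = x \<and> pval w2 A2 q2 = x \<and> pval v2 B2 q2 = x) \<or>
     (\<exists>u u'. x = Some u \<and> y = Some u' \<and> sublist u w1 \<and> \<not> sublist u w2 \<and>
        sublist u' v1 \<and> \<not> sublist u' v2 \<and> pval w1 A1 q1 = x \<and> pval v1 B1 q1 = y) \<or>
     (\<exists>u u'. x = Some u \<and> y = Some u' \<and> sublist u w2 \<and> \<not> sublist u w1 \<and>
        sublist u' v2 \<and> \<not> sublist u' v1 \<and> pval w2 A2 q2 = x \<and> pval v2 B2 q2 = y) \<or>
     (\<exists>s p s' p'. x = Some (s @ p) \<and> y = Some (s' @ p') \<and>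
        \<not> sublist (s @ p) w1 \<and> \<not> sublist (s @ p) w2 \<and> \<not> sublist (s' @ p') v1 \<and> \<not> sublist (s' @ p') v2 \<and>
        sublist s w1 \<and> sublist p w2 \<and> sublist s' v1 \<and> sublist p' v2 \<and>
        pval w1 A1 q1 = Some s \<and> pval v1 B1 q1 = Some s' \<and>
        pval w2 A2 q2 = Some p \<and> pval v2 B2 q2 = Some p'))"

lemma tracked_NoneI:
  "valid_pos (length A1) q1 \<Longrightarrow> valid_pos (length A2) q2 \<Longrightarrow> tracked A1 B1 A2 B2 None None q1 q2"
  by (simp add: tracked_def)

lemma tracked_commonI:
  "valid_pos (length A1) q1 \<Longrightarrow> valid_pos (length A2) q2 \<Longrightarrow> sublist u w1 \<Longrightarrow> sublist u w2 \<Longrightarrow>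
    pval w1 A1 q1 = Some u \<Longrightarrow> pval v1 B1 q1 = Some u \<Longrightarrow> pval w2 A2 q2 = Some u \<Longrightarrow> pval v2 B2 q2 = Some u \<Longrightarrow>
    tracked A1 B1 A2 B2 (Some u) (Some u) q1 q2"
  by (simp add: tracked_def)

lemma tracked_leftI:
  "valid_pos (length A1) q1 \<Longrightarrow> valid_pos (length A2) q2 \<Longrightarrow> sublist u w1 \<Longrightarrow> \<not> sublist u w2 \<Longrightarrow>
    sublist u' v1 \<Longrightarrow> \<not> sublist u' v2 \<Longrightarrow> pval w1 A1 q1 = Some u \<Longrightarrow> pval v1 B1 q1 = Some u' \<Longrightarrow>
    tracked A1 B1 A2 B2 (Some u) (Some u') q1 q2"
  by (simp add: tracked_def)

lemma tracked_rightI: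
  "valid_pos (length A1) q1 \<Longrightarrow> valid_pos (length A2) q2 \<Longrightarrow> sublist u w2 \<Longrightarrow> \<not> sublist u w1 \<Longrightarrow>
    sublist u' v2 \<Longrightarrow> \<not> sublist u' v1 \<Longrightarrow> pval w2 A2 q2 = Some u \<Longrightarrow> pval v2 B2 q2 = Some u' \<Longrightarrow>
    tracked A1 B1 A2 B2 (Some u) (Some u') q1 q2"
  by (simp add: tracked_def)

lemma tracked_crossingI:
  "valid_pos (length A1) q1 \<Longrightarrow> valid_pos (length A2) q2 \<Longrightarrow>
    \<not> sublist (s @ p) w1 \<Longrightarrow> \<not> sublist (s @ p) w2 \<Longrightarrow> \<not> sublist (s' @ p') v1 \<Longrightarrow> \<not> sublist (s' @ p') v2 \<Longrightarrow>
    sublist s w1 \<Longrightarrow> sublist p w2 \<Longrightarrow> sublist s' v1 \<Longrightarrow> sublist p' v2 \<Longrightarrow>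
    pval w1 A1 q1 = Some s \<Longrightarrow> pval v1 B1 q1 = Some s' \<Longrightarrow> pval w2 A2 q2 = Some p \<Longrightarrow> pval v2 B2 q2 = Some p' \<Longrightarrow>
    tracked A1 B1 A2 B2 (Some (s @ p)) (Some (s' @ p')) q1 q2"
  unfolding tracked_def by blast

lemma tracked_valid:
  "tracked A1 B1 A2 B2 x y q1 q2 \<Longrightarrow> valid_pos (length A1) q1 \<and> valid_pos (length A2) q2"
  by (simp add: tracked_def)

lemma tracked_None_iff: "tracked A1 B1 A2 B2 x y q1 q2 \<Longrightarrow> x = None \<longleftrightarrow> y = None"
  unfolding tracked_def by auto

lemma tracked_left:
  "tracked A1 B1 A2 B2 x y q1 q2 \<Longrightarrow> x = Some u \<Longrightarrow> sublist u w1 \<Longrightarrow>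
    pval w1 A1 q1 = Some u \<and> (\<exists>u'. y = Some u' \<and> pval v1 B1 q1 = Some u')"
  unfolding tracked_def by auto

lemma tracked_right:
  "tracked A1 B1 A2 B2 x y q1 q2 \<Longrightarrow> x = Some u \<Longrightarrow> sublist u w2 \<Longrightarrow>
    pval w2 A2 q2 = Some u \<and> (\<exists>u'. y = Some u' \<and> pval v2 B2 q2 = Some u')"
  unfolding tracked_def by auto

lemma tracked_crossing:
  "tracked A1 B1 A2 B2 x y q1 q2 \<Longrightarrow> x = Some u \<Longrightarrow> \<not> sublist u w1 \<Longrightarrow> \<not> sublist u w2 \<Longrightarrow>
    \<exists>s p s' p'. u = s @ p \<and> y = Some (s' @ p') \<and> sublist s w1 \<and> sublist p w2 \<and>
      pval w1 A1 q1 = Some s \<and> pval v1 B1 q1 = Some s' \<and> pval w2 A2 q2 = Some p \<and> pval v2 B2 q2 = Some p'"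
  unfolding tracked_def by auto

lemma tracked_swap:
  assumes tr: "tracked A1 B1 A2 B2 x y q1 q2" and len: "length A1 = length B1" "length A2 = length B2"
  shows "concat_games.tracked v1 v2 w1 w2 B1 A1 B2 A2 y x q1 q2"
  unfolding concat_games.tracked_def[OF swap]
proof (intro conjI)
  show "valid_pos (length B1) q1" "valid_pos (length B2) q2"
    using tracked_valid[OF tr] len by simp_all
  show "y = None \<and> x = None \<or>
     (\<exists>u. y = Some u \<and> x = Some u \<and> sublist u v1 \<and> sublist u v2 \<and>
        pval v1 B1 q1 = y \<and> pval w1 A1 q1 = y \<and> pval v2 B2 q2 = y \<and> pval w2 A2 q2 = y) \<or>
     (\<exists>u u'. y = Some u \<and> x = Some u' \<and> sublist u v1 \<and> \<not> sublist u v2 \<and>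
        sublist u' w1 \<and> \<not> sublist u' w2 \<and> pval v1 B1 q1 = y \<and> pval w1 A1 q1 = x) \<or>
     (\<exists>u u'. y = Some u \<and> x = Some u' \<and> sublist u v2 \<and> \<not> sublist u v1 \<and>
        sublist u' w2 \<and> \<not> sublist u' w1 \<and> pval v2 B2 q2 = y \<and> pval w2 A2 q2 = x) \<or>
     (\<exists>s p s' p'. y = Some (s @ p) \<and> x = Some (s' @ p') \<and>
        \<not> sublist (s @ p) v1 \<and> \<not> sublist (s @ p) v2 \<and> \<not> sublist (s' @ p') w1 \<and> \<not> sublist (s' @ p') w2 \<and>
        sublist s v1 \<and> sublist p v2 \<and> sublist s' w1 \<and> sublist p' w2 \<and>
        pval v1 B1 q1 = Some s \<and> pval w1 A1 q1 = Some s' \<and>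
        pval v2 B2 q2 = Some p \<and> pval w2 A2 q2 = Some p')"
    using tr same_common_factors unfolding tracked_def
    by (elim conjE disjE exE) (metis, metis, blast, blast, blast)
qed

lemma tracked_snoc:
  assumes "tracked A1 B1 A2 B2 x y q1 q2" "length A1 = length B1" "length A2 = length B2"
  shows "tracked (A1 @ [a1]) (B1 @ [b1]) (A2 @ [a2]) (B2 @ [b2]) x y q1 q2"
proof -
  have q: "valid_pos (length A1) q1" "valid_pos (length A2) q2"
    using assms(1) by (rule tracked_valid[THEN conjunct1], rule tracked_valid[THEN conjunct2])
  then have "pval w1 (A1 @ [a1]) q1 = pval w1 A1 q1" "pval v1 (B1 @ [b1]) q1 = pval v1 B1 q1"
    "pval w2 (A2 @ [a2]) q2 = pval w2 A2 q2" "pval v2 (B2 @ [b2]) q2 = pval v2 B2 q2"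
    using assms(2,3) pval_append by metis+
  with assms(1) q show ?thesis
    unfolding tracked_def by simp
qed

end

locale final_position = concat_games +
  fixes A1 B1 A2 B2 :: "'a list option list"
  assumes game1: "dup_wins (Suc (Suc r)) w1 v1 A1 B1"
    and game2: "dup_wins (Suc (Suc r)) w2 v2 A2 B2"
begin

lemma swap_final: "final_position v1 v2 w1 w2 r B1 A1 B2 A2"
  using final_position.intro[OF swap final_position_axioms.intro[OF dup_wins_sym dup_wins_sym]]
    game1 game2 .

lemma tracked_eq:
  assumes i: "tracked A1 B1 A2 B2 xi yi qi1 qi2" and j: "tracked A1 B1 A2 B2 xj yj qj1 qj2"
    and "xi = xj"
  shows "yi = yj"
proof (cases xi)
  case None
  then show ?thesis
    using tracked_None_iff[OF i] tracked_None_iff[OF j] assms(3) by simp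
next
  case (Some u)
  note qi = tracked_valid[OF i] and qj = tracked_valid[OF j]
  have xj: "xj = Some u"
    using assms(3) Some by simp
  consider "sublist u w1" | "sublist u w2" | "\<not> sublist u w1" "\<not> sublist u w2"
    by blast
  then show ?thesis
  proof cases
    case 1
    then show ?thesis
      using tracked_left[OF i Some] tracked_left[OF j xj] qi qj
        partial_iso_eq_iff[OF dup_wins_partial_iso[OF game1], of qi1 qj1] by auto
  next
    case 2
    then show ?thesis
      using tracked_right[OF i Some] tracked_right[OF j xj] qi qj
        partial_iso_eq_iff[OF dup_wins_partial_iso[OF game2], of qi2 qj2] by auto
  next
    case 3
    obtain si pi si' pi' where Xi: "u = si @ pi" "yi = Some (si' @ pi')" "sublist si w1" "sublist pi w2"
      "pval w1 A1 qi1 = Some si" "pval v1 B1 qi1 = Some si'"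
      "pval w2 A2 qi2 = Some pi" "pval v2 B2 qi2 = Some pi'"
      using tracked_crossing[OF i Some 3] by blast
    obtain sj pj sj' pj' where Xj: "u = sj @ pj" "yj = Some (sj' @ pj')" "sublist sj w1" "sublist pj w2"
      "pval w1 A1 qj1 = Some sj" "pval v1 B1 qj1 = Some sj'"
      "pval w2 A2 qj2 = Some pj" "pval v2 B2 qj2 = Some pj'"
      using tracked_crossing[OF j xj 3] by blast
    text \<open>The two splittings differ by a factor \<open>t\<close> common to \<open>w1\<close> and \<open>w2\<close>, hence short.\<close>
    have shift: "si' @ pi' = sj' @ pj'"
      if "si = sj @ t" "t @ pi = pj" "sublist si w1" "sublist pj w2"
        "pval w1 A1 qi1 = Some si" "pval v1 B1 qi1 = Some si'" "pval w2 A2 qi2 = Some pi" "pval v2 B2 qi2 = Some pi'"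
        "pval w1 A1 qj1 = Some sj" "pval v1 B1 qj1 = Some sj'" "pval w2 A2 qj2 = Some pj" "pval v2 B2 qj2 = Some pj'"
        "valid_pos (length A1) qi1" "valid_pos (length A2) qi2"
        "valid_pos (length A1) qj1" "valid_pos (length A2) qj2"
      for si pi si' pi' qi1 qi2 sj pj sj' pj' qj1 qj2 t
    proof -
      have t: "sublist t w1" "sublist t w2"
        using that(1-4) sublist_appendD1 sublist_appendD2 by metis+
      then have short: "length t \<le> Suc (Suc r)"
        using common_factor_length by fastforce
      have "pval v1 B1 qi1 = Some (sj' @ t)"
        by (rule dup_wins_append_short_factor[OF game1 t(1) short, of qi1 qj1 sj]) (use that in auto)
      moreover have "pval v2 B2 qj2 = Some (t @ pi')"
        by (rule dup_wins_prepend_short_factor[OF game2 t(2) short, of qj2 qi2 pi]) (use that in auto)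
      ultimately show ?thesis
        using that by simp
    qed
    obtain t where "si = sj @ t \<and> t @ pi = pj \<or> si @ t = sj \<and> pi = t @ pj"
      using Xi(1) Xj(1) append_eq_append_conv2 by metis
    then show ?thesis
    proof
      assume "si = sj @ t \<and> t @ pi = pj"
      then show ?thesis
        using shift[of si sj t pi pj qi1 si' qi2 pi' qj1 sj' qj2 pj'] Xi Xj qi qj by blast
    next
      assume "si @ t = sj \<and> pi = t @ pj"
      then show ?thesis
        using shift[of sj si t pj pi qj1 sj' qj2 pj' qi1 si' qi2 pi'] Xi Xj qi qj by simp
    qed
  qed
qed

end

lemma (in concat_games) common_factor_short:
  "sublist t w1 \<Longrightarrow> sublist t w2 \<Longrightarrow> length t \<le> Suc (Suc r)"
  using common_factor_length by fastforce

context final_position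
begin

text \<open>A concatenation \<open>a @ b\<close> that crosses the border with \<open>a\<close> ending inside the \<open>w1\<close>-part
  \<open>a @ m\<close> of the split: the pieces are matched by combining the two games along a short common
  factor (\<open>p\<close>, \<open>m\<close>, or the overlap \<open>t\<close> of two splittings).\<close>

lemma tracked_concat_split_left:
  assumes j: "tracked A1 B1 A2 B2 (Some a) yj qj1 qj2"
    and l: "tracked A1 B1 A2 B2 (Some (m @ p)) yl ql1 ql2"
    and s: "sublist (a @ m) w1" "pval w1 A1 qi1 = Some (a @ m)" "pval v1 B1 qi1 = Some s'"
    and p: "sublist p w2" "pval w2 A2 qi2 = Some p" "pval v2 B2 qi2 = Some p'"
    and qi: "valid_pos (length A1) qi1" "valid_pos (length A2) qi2"
  shows "\<exists>a' b'. yj = Some a' \<and> yl = Some b' \<and> s' @ p' = a' @ b'"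
proof -
  note qj = tracked_valid[OF j] and ql = tracked_valid[OF l]
  have a: "sublist a w1" and m: "sublist m w1"
    using s(1) sublist_appendD1 sublist_appendD2 by blast+
  obtain a' where a': "pval w1 A1 qj1 = Some a" "yj = Some a'" "pval v1 B1 qj1 = Some a'"
    using tracked_left[OF j refl a] by blast
  consider "sublist (m @ p) w1" | "\<not> sublist (m @ p) w1" "sublist (m @ p) w2"
    | "\<not> sublist (m @ p) w1" "\<not> sublist (m @ p) w2"
    by blast
  then show ?thesis
  proof cases
    case 1
    obtain b' where b': "pval w1 A1 ql1 = Some (m @ p)" "yl = Some b'" "pval v1 B1 ql1 = Some b'"
      using tracked_left[OF l refl 1] by blast
    have p_short: "sublist p w1" "length p \<le> Suc (Suc r)"
      using 1 p(1) sublist_appendD2 common_factor_short by blast+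
    then have "p' = p"
      using dup_wins_short_factor[OF game2 qi(2) p(2) p(1)] p(3) by simp
    moreover obtain m' where "s' = a' @ m'" "b' = m' @ p"
      using dup_wins_overlap_short_right[OF game1 p_short m, of qi1 qj1 ql1 a a'] qi qj ql s a' b'
      by auto
    ultimately show ?thesis
      using a' b' by simp
  next
    case 2
    obtain b' where b': "pval w2 A2 ql2 = Some (m @ p)" "yl = Some b'" "pval v2 B2 ql2 = Some b'"
      using tracked_right[OF l refl 2(2)] by blast
    have m_short: "sublist m w2" "length m \<le> Suc (Suc r)"
      using 2 m sublist_appendD1 common_factor_short by blast+
    have "s' = a' @ m"
      using dup_wins_append_short_factor[OF game1 m m_short(2), of qi1 qj1 a a'] qi qj s a' by simp
    moreover have "b' = m @ p'"
      using dup_wins_prepend_short_factor[OF game2 m_short, of ql2 qi2 p p'] qi ql p b' by simp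
    ultimately show ?thesis
      using a' b' by simp
  next
    case 3
    obtain sl pl sl' pl' where l': "m @ p = sl @ pl" "yl = Some (sl' @ pl')" "sublist sl w1" "sublist pl w2"
      "pval w1 A1 ql1 = Some sl" "pval v1 B1 ql1 = Some sl'" "pval w2 A2 ql2 = Some pl" "pval v2 B2 ql2 = Some pl'"
      using tracked_crossing[OF l refl 3] by blast
    obtain t where "m = sl @ t \<and> t @ p = pl \<or> m @ t = sl \<and> p = t @ pl"
      using l'(1) append_eq_append_conv2 by metis
    then show ?thesis
    proof
      assume t: "m = sl @ t \<and> t @ p = pl"
      then have t_short: "sublist t w1" "sublist t w2" "length t \<le> Suc (Suc r)"
        using m l'(4) sublist_appendD1 sublist_appendD2 common_factor_short by blast+
      have "s' = a' @ sl' @ t"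
        using dup_wins_concat_append_short_factor[OF game1 t_short(1,3), of sl qi1 qj1 ql1 a a' sl']
          t m qi qj ql s a' l' by simp
      moreover have "pl' = t @ p'"
        using dup_wins_prepend_short_factor[OF game2 t_short(2,3), of ql2 qi2 p p'] t qi ql p l' by simp
      ultimately show ?thesis
        using a' l' by simp
    next
      assume t: "m @ t = sl \<and> p = t @ pl"
      then have t_short: "sublist t w1" "sublist t w2" "length t \<le> Suc (Suc r)"
        using p(1) l'(3) sublist_appendD1 sublist_appendD2 common_factor_short by blast+
      obtain m' where "s' = a' @ m'" "sl' = m' @ t"
        using dup_wins_overlap_short_right[OF game1 t_short(1,3) m, of qi1 qj1 ql1 a a'] t qi qj ql s a' l'
        by auto
      moreover have "p' = t @ pl'"
        using dup_wins_prepend_short_factor[OF game2 t_short(2,3), of qi2 ql2 pl pl'] t qi ql p l' by simp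
      ultimately show ?thesis
        using a' l' by simp
    qed
  qed
qed

lemma tracked_concat_split_right:
  assumes j: "tracked A1 B1 A2 B2 (Some (s @ m)) yj qj1 qj2"
    and l: "tracked A1 B1 A2 B2 (Some b) yl ql1 ql2"
    and s: "sublist s w1" "pval w1 A1 qi1 = Some s" "pval v1 B1 qi1 = Some s'"
    and p: "sublist (m @ b) w2" "pval w2 A2 qi2 = Some (m @ b)" "pval v2 B2 qi2 = Some p'"
    and qi: "valid_pos (length A1) qi1" "valid_pos (length A2) qi2"
  shows "\<exists>a' b'. yj = Some a' \<and> yl = Some b' \<and> s' @ p' = a' @ b'"
proof -
  note qj = tracked_valid[OF j] and ql = tracked_valid[OF l]
  have b: "sublist b w2" and m: "sublist m w2"
    using p(1) sublist_appendD1 sublist_appendD2 by blast+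
  obtain b' where b': "pval w2 A2 ql2 = Some b" "yl = Some b'" "pval v2 B2 ql2 = Some b'"
    using tracked_right[OF l refl b] by blast
  consider "sublist (s @ m) w2" | "\<not> sublist (s @ m) w2" "sublist (s @ m) w1"
    | "\<not> sublist (s @ m) w1" "\<not> sublist (s @ m) w2"
    by blast
  then show ?thesis
  proof cases
    case 1
    obtain a' where a': "pval w2 A2 qj2 = Some (s @ m)" "yj = Some a'" "pval v2 B2 qj2 = Some a'"
      using tracked_right[OF j refl 1] by blast
    have s_short: "sublist s w2" "length s \<le> Suc (Suc r)"
      using 1 s(1) sublist_appendD1 common_factor_short by blast+
    then have "s' = s"
      using dup_wins_short_factor[OF game1 qi(1) s(2) s(1)] s(3) by simp
    moreover obtain m' where "a' = s @ m'" "p' = m' @ b'"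
      using dup_wins_overlap_short_left[OF game2 s_short m, of qj2 qi2 ql2 b b'] qi qj ql p a' b'
      by auto
    ultimately show ?thesis
      using a' b' by simp
  next
    case 2
    obtain a' where a': "pval w1 A1 qj1 = Some (s @ m)" "yj = Some a'" "pval v1 B1 qj1 = Some a'"
      using tracked_left[OF j refl 2(2)] by blast
    have m_short: "sublist m w1" "length m \<le> Suc (Suc r)"
      using 2 m sublist_appendD2 common_factor_short by blast+
    have "a' = s' @ m"
      using dup_wins_append_short_factor[OF game1 m_short, of qj1 qi1 s s'] qi qj s a' by simp
    moreover have "p' = m @ b'"
      using dup_wins_prepend_short_factor[OF game2 m m_short(2), of qi2 ql2 b b'] qi ql p b' by simp
    ultimately show ?thesis
      using a' b' by simp
  next
    case 3
    obtain sj pj sj' pj' where j': "s @ m = sj @ pj" "yj = Some (sj' @ pj')" "sublist sj w1" "sublist pj w2"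
      "pval w1 A1 qj1 = Some sj" "pval v1 B1 qj1 = Some sj'" "pval w2 A2 qj2 = Some pj" "pval v2 B2 qj2 = Some pj'"
      using tracked_crossing[OF j refl 3] by blast
    obtain t where "s = sj @ t \<and> t @ m = pj \<or> s @ t = sj \<and> m = t @ pj"
      using j'(1) append_eq_append_conv2 by metis
    then show ?thesis
    proof
      assume t: "s = sj @ t \<and> t @ m = pj"
      then have t_short: "sublist t w1" "sublist t w2" "length t \<le> Suc (Suc r)"
        using s(1) j'(4) sublist_appendD1 sublist_appendD2 common_factor_short by blast+
      have "s' = sj' @ t"
        using dup_wins_append_short_factor[OF game1 t_short(1,3), of qi1 qj1 sj sj'] t qi qj s j' by simp
      moreover obtain m' where "pj' = t @ m'" "p' = m' @ b'"
        using dup_wins_overlap_short_left[OF game2 t_short(2,3) m, of qj2 qi2 ql2 b b'] t qi qj ql p j' b'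
        by auto
      ultimately show ?thesis
        using j' b' by simp
    next
      assume t: "s @ t = sj \<and> m = t @ pj"
      then have t_short: "sublist t w1" "sublist t w2" "length t \<le> Suc (Suc r)"
        using m j'(3) sublist_appendD1 sublist_appendD2 common_factor_short by blast+
      have "sj' = s' @ t"
        using dup_wins_append_short_factor[OF game1 t_short(1,3), of qj1 qi1 s s'] t qi qj s j' by simp
      moreover have "p' = (t @ pj') @ b'"
        using dup_wins_concat_prepend_short_factor[OF game2 t_short(2,3), of pj qi2 qj2 ql2 b pj' b']
          t m p qi qj ql j' b' by simp
      ultimately show ?thesis
        using j' b' by simp
    qed
  qed
qed

lemma tracked_concat:
  assumes i: "tracked A1 B1 A2 B2 (Some (a @ b)) yi qi1 qi2"
    and j: "tracked A1 B1 A2 B2 (Some a) yj qj1 qj2" and l: "tracked A1 B1 A2 B2 (Some b) yl ql1 ql2"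
  shows "\<exists>a' b'. yj = Some a' \<and> yl = Some b' \<and> yi = Some (a' @ b')"
proof -
  note qi = tracked_valid[OF i] and qj = tracked_valid[OF j] and ql = tracked_valid[OF l]
  consider "sublist (a @ b) w1" | "sublist (a @ b) w2" | "\<not> sublist (a @ b) w1" "\<not> sublist (a @ b) w2"
    by blast
  then show ?thesis
  proof cases
    case 1
    then have "sublist a w1" "sublist b w1"
      using sublist_appendD1 sublist_appendD2 by blast+
    then show ?thesis
      using tracked_left[OF i refl 1] tracked_left[OF j refl] tracked_left[OF l refl] qi qj ql
        dup_wins_concat[OF game1, of qi1 qj1 ql1 a b] by fastforce
  next
    case 2
    then have "sublist a w2" "sublist b w2"
      using sublist_appendD1 sublist_appendD2 by blast+
    then show ?thesis
      using tracked_right[OF i refl 2] tracked_right[OF j refl] tracked_right[OF l refl] qi qj ql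
        dup_wins_concat[OF game2, of qi2 qj2 ql2 a b] by fastforce
  next
    case 3
    obtain s p s' p' where i': "a @ b = s @ p" "yi = Some (s' @ p')" "sublist s w1" "sublist p w2"
      "pval w1 A1 qi1 = Some s" "pval v1 B1 qi1 = Some s'" "pval w2 A2 qi2 = Some p" "pval v2 B2 qi2 = Some p'"
      using tracked_crossing[OF i refl 3] by blast
    obtain m where "a @ m = s \<and> b = m @ p \<or> a = s @ m \<and> m @ b = p"
      using i'(1) append_eq_append_conv2 by metis
    then show ?thesis
    proof
      assume "a @ m = s \<and> b = m @ p"
      then have "tracked A1 B1 A2 B2 (Some (m @ p)) yl ql1 ql2"
        "sublist (a @ m) w1" "pval w1 A1 qi1 = Some (a @ m)"
        using l i' by simp_all
      from tracked_concat_split_left[OF j this i'(6) i'(4,7,8) qi[THEN conjunct1] qi[THEN conjunct2]] show ?thesis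
        using i'(2) by auto
    next
      assume "a = s @ m \<and> m @ b = p"
      then have "tracked A1 B1 A2 B2 (Some (s @ m)) yj qj1 qj2"
        "sublist (m @ b) w2" "pval w2 A2 qi2 = Some (m @ b)"
        using j i' by simp_all
      from tracked_concat_split_right[OF this(1) l i'(3,5,6) this(2,3) i'(8) qi[THEN conjunct1] qi[THEN conjunct2]] show ?thesis
        using i'(2) by auto
    qed
  qed
qed

end

context final_position
begin

lemma tracked_Rcat:
  assumes i: "tracked A1 B1 A2 B2 xi yi qi1 qi2" and j: "tracked A1 B1 A2 B2 xj yj qj1 qj2"
    and l: "tracked A1 B1 A2 B2 xl yl ql1 ql2" and "Rcat xi xj xl"
  shows "Rcat yi yj yl"
proof -
  obtain a b where "xi = Some (a @ b)" "xj = Some a" "xl = Some b"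
    using assms(4) by (auto simp: Rcat_def)
  with i j l show ?thesis
    using tracked_concat by (fastforce simp: Rcat_def)
qed

lemma composite_partial_iso:
  assumes len: "length as = length bs"
    and tracked_all: "\<And>q. valid_pos (length as) q \<Longrightarrow>
      \<exists>q1 q2. tracked A1 B1 A2 B2 (pval (w1 @ w2) as q) (pval (v1 @ v2) bs q) q1 q2"
  shows "partial_iso (w1 @ w2) (v1 @ v2) as bs"
proof -
  interpret swapped: final_position v1 v2 w1 w2 r B1 A1 B2 A2
    by (rule swap_final)
  have len1: "length A1 = length B1" and len2: "length A2 = length B2"
    using game1 game2 dup_wins_length by blast+
  let ?x = "pval (w1 @ w2) as" and ?y = "pval (v1 @ v2) bs"
  have "(?x i = ?x j \<longleftrightarrow> ?y i = ?y j) \<and> (Rcat (?x i) (?x j) (?x l) \<longleftrightarrow> Rcat (?y i) (?y j) (?y l))"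
    if valid: "valid_pos (length as) i \<and> valid_pos (length as) j \<and> valid_pos (length as) l" for i j l
  proof -
    obtain i1 i2 j1 j2 l1 l2 where
      i: "tracked A1 B1 A2 B2 (?x i) (?y i) i1 i2" and
      j: "tracked A1 B1 A2 B2 (?x j) (?y j) j1 j2" and
      l: "tracked A1 B1 A2 B2 (?x l) (?y l) l1 l2"
      using valid tracked_all by meson
    note i' = tracked_swap[OF i len1 len2] and j' = tracked_swap[OF j len1 len2]
      and l' = tracked_swap[OF l len1 len2]
    show ?thesis
      using tracked_eq[OF i j] swapped.tracked_eq[OF i' j']
        tracked_Rcat[OF i j l] swapped.tracked_Rcat[OF i' j' l'] by blast
  qed
  with len show ?thesis
    unfolding partial_iso_def by blast
qed

end

context concat_games
begin

lemma tracked_Eps: "tracked A1 B1 A2 B2 (Some []) (Some []) Eps Eps"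
  by (simp add: tracked_def)

lemma tracked_letter:
  assumes "dup_wins n1 w1 v1 A1 B1" "dup_wins n2 w2 v2 A2 B2"
  shows "tracked A1 B1 A2 B2 (letter_const (w1 @ w2) c) (letter_const (v1 @ v2) c)
    (if c \<in> set w1 then Letter c else Eps) (if c \<in> set w2 then Letter c else Eps)"
  using dup_wins_letter_iff[OF assms(1), of c] dup_wins_letter_iff[OF assms(2), of c]
  unfolding tracked_def by (auto simp: letter_const_def sublist_singleton_iff)

end

locale reply_position = concat_games +
  fixes N :: nat and A1 B1 A2 B2 :: "'a list option list"
  assumes game1: "dup_wins (Suc N) w1 v1 A1 B1" and game2: "dup_wins (Suc N) w2 v2 A2 B2"
    and enough_rounds: "r + 2 \<le> N"
begin

definition simulated_reply :: "'a list option \<Rightarrow> 'a list option \<Rightarrow> bool" where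
  "simulated_reply x y \<longleftrightarrow> (\<exists>a1 b1 a2 b2.
    dup_wins N w1 v1 (A1 @ [a1]) (B1 @ [b1]) \<and> dup_wins N w2 v2 (A2 @ [a2]) (B2 @ [b2]) \<and>
    tracked (A1 @ [a1]) (B1 @ [b1]) (A2 @ [a2]) (B2 @ [b2]) x y (Chosen (length A1)) (Chosen (length A2)))"

lemma length_A1: "length A1 = length B1" and length_A2: "length A2 = length B2"
  using game1 game2 dup_wins_length by blast+

lemma common_factor_le_rounds: "sublist t w1 \<Longrightarrow> sublist t w2 \<Longrightarrow> length t \<le> N"
  using common_factor_length enough_rounds by fastforce

lemma reply_None: "simulated_reply None None"
proof -
  obtain b1 b2 where "dup_wins N w1 v1 (A1 @ [None]) (B1 @ [b1])" "dup_wins N w2 v2 (A2 @ [None]) (B2 @ [b2])"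
    using dup_wins_Suc_left[OF game1 None_in_univ] dup_wins_Suc_left[OF game2 None_in_univ] by blast
  moreover have "tracked (A1 @ [None]) (B1 @ [b1]) (A2 @ [None]) (B2 @ [b2]) None None
      (Chosen (length A1)) (Chosen (length A2))"
    by (simp add: tracked_NoneI)
  ultimately show ?thesis
    unfolding simulated_reply_def by blast
qed

lemma reply_common_factor:
  assumes "sublist u w1" "sublist u w2"
  shows "simulated_reply (Some u) (Some u)"
proof -
  have "length u \<le> Suc N"
    using common_factor_le_rounds assms by fastforce
  then have "dup_wins N w1 v1 (A1 @ [Some u]) (B1 @ [Some u])" "dup_wins N w2 v2 (A2 @ [Some u]) (B2 @ [Some u])"
    using dup_wins_pick_short_factor game1 game2 assms by blast+
  moreover have "tracked (A1 @ [Some u]) (B1 @ [Some u]) (A2 @ [Some u]) (B2 @ [Some u]) (Some u) (Some u)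
      (Chosen (length A1)) (Chosen (length A2))"
    using assms length_A1 length_A2 by (simp add: tracked_commonI nth_append)
  ultimately show ?thesis
    unfolding simulated_reply_def by blast
qed

lemma reply_left_factor:
  assumes u: "sublist u w1" "\<not> sublist u w2"
  shows "\<exists>u'. sublist u' v1 \<and> simulated_reply (Some u) (Some u')"
proof -
  obtain u' where u': "sublist u' v1" and reply1: "dup_wins N w1 v1 (A1 @ [Some u]) (B1 @ [Some u'])"
    using dup_wins_pick_factor[OF game1 u(1)] by blast
  obtain b2 where reply2: "dup_wins N w2 v2 (A2 @ [None]) (B2 @ [b2])"
    using dup_wins_Suc_left[OF game2 None_in_univ] by blast
  have "\<not> sublist u' v2"
  proof
    assume "sublist u' v2"
    then have common: "sublist u' w1" "sublist u' w2"
      using same_common_factors u' by blast+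
    then have "pval w1 (A1 @ [Some u]) (Chosen (length A1)) = Some u'"
      using dup_wins_short_factor_sym[OF reply1, of "Chosen (length A1)" u'] u' length_A1
        le_SucI[OF common_factor_le_rounds[OF common]] by (simp add: nth_append)
    with u(2) common(2) show False
      by simp
  qed
  then have "tracked (A1 @ [Some u]) (B1 @ [Some u']) (A2 @ [None]) (B2 @ [b2]) (Some u) (Some u')
      (Chosen (length A1)) (Chosen (length A2))"
    using u u' length_A1 by (simp add: tracked_leftI nth_append)
  with reply1 reply2 u' show ?thesis
    unfolding simulated_reply_def by blast
qed

lemma reply_right_factor:
  assumes u: "sublist u w2" "\<not> sublist u w1"
  shows "\<exists>u'. sublist u' v2 \<and> simulated_reply (Some u) (Some u')"
proof -
  obtain u' where u': "sublist u' v2" and reply2: "dup_wins N w2 v2 (A2 @ [Some u]) (B2 @ [Some u'])"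
    using dup_wins_pick_factor[OF game2 u(1)] by blast
  obtain b1 where reply1: "dup_wins N w1 v1 (A1 @ [None]) (B1 @ [b1])"
    using dup_wins_Suc_left[OF game1 None_in_univ] by blast
  have "\<not> sublist u' v1"
  proof
    assume "sublist u' v1"
    then have common: "sublist u' w1" "sublist u' w2"
      using same_common_factors u' by blast+
    then have "pval w2 (A2 @ [Some u]) (Chosen (length A2)) = Some u'"
      using dup_wins_short_factor_sym[OF reply2, of "Chosen (length A2)" u'] u' length_A2
        le_SucI[OF common_factor_le_rounds[OF common]] by (simp add: nth_append)
    with u(2) common(1) show False
      by simp
  qed
  then have "tracked (A1 @ [None]) (B1 @ [b1]) (A2 @ [Some u]) (B2 @ [Some u']) (Some u) (Some u')
      (Chosen (length A1)) (Chosen (length A2))"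
    using u u' length_A2 by (simp add: tracked_rightI nth_append)
  with reply1 reply2 u' show ?thesis
    unfolding simulated_reply_def by blast
qed

text \<open>If the answer \<open>s' @ p'\<close> to a crossing factor \<open>s @ p\<close> were a factor of \<open>v1\<close>, then \<open>p'\<close>
  would be a short common factor, hence equal to \<open>p\<close>, and the first game would transfer
  \<open>s' @ p\<close> back to the factor \<open>s @ p\<close> of \<open>w1\<close>.\<close>

lemma crossing_reply_not_left_factor:
  assumes reply1: "dup_wins N w1 v1 (A1 @ [Some s]) (B1 @ [Some s'])"
    and reply2: "dup_wins N w2 v2 (A2 @ [Some p]) (B2 @ [Some p'])"
    and "sublist p' v2" "\<not> sublist (s @ p) w1"
  shows "\<not> sublist (s' @ p') v1"
proof
  assume sp': "sublist (s' @ p') v1"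
  then have common: "sublist p' w1" "sublist p' w2"
    using same_common_factors assms(3) sublist_appendD2 by blast+
  then have "pval w2 (A2 @ [Some p]) (Chosen (length A2)) = Some p'"
    using dup_wins_short_factor_sym[OF reply2, of "Chosen (length A2)" p'] assms(3) length_A2
      le_SucI[OF common_factor_le_rounds[OF common]] by (simp add: nth_append)
  then have p: "p' = p"
    by (simp add: nth_append)
  define j where "j = N - 2"
  have N: "N = Suc (Suc j)"
    using enough_rounds unfolding j_def by simp
  have t: "sublist p v1" "length p \<le> Suc (Suc j)"
    using sp' sublist_appendD2[of s' p' v1] common_factor_le_rounds[OF common] p N by simp_all
  have "sublist (s @ p) w1"
    using dup_wins_factor_append_short_factor[OF dup_wins_sym[OF reply1, unfolded N] t,
        of "Chosen (length B1)" s' s] sp' p length_A1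
    by (simp add: nth_append)
  with assms(4) show False
    by simp
qed

lemma crossing_reply_not_right_factor:
  assumes reply1: "dup_wins N w1 v1 (A1 @ [Some s]) (B1 @ [Some s'])"
    and reply2: "dup_wins N w2 v2 (A2 @ [Some p]) (B2 @ [Some p'])"
    and "sublist s' v1" "\<not> sublist (s @ p) w2"
  shows "\<not> sublist (s' @ p') v2"
proof
  assume sp': "sublist (s' @ p') v2"
  then have common: "sublist s' w1" "sublist s' w2"
    using same_common_factors assms(3) sublist_appendD1 by blast+
  then have "pval w1 (A1 @ [Some s]) (Chosen (length A1)) = Some s'"
    using dup_wins_short_factor_sym[OF reply1, of "Chosen (length A1)" s'] assms(3) length_A1
      le_SucI[OF common_factor_le_rounds[OF common]] by (simp add: nth_append)
  then have s: "s' = s"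
    by (simp add: nth_append)
  define j where "j = N - 2"
  have N: "N = Suc (Suc j)"
    using enough_rounds unfolding j_def by simp
  have t: "sublist s v2" "length s \<le> Suc (Suc j)"
    using sp' sublist_appendD1[of s' p' v2] common_factor_le_rounds[OF common] s N by simp_all
  have "sublist (s @ p) w2"
    using dup_wins_factor_prepend_short_factor[OF dup_wins_sym[OF reply2, unfolded N] t,
        of "Chosen (length B2)" p' p] sp' s length_A2
    by (simp add: nth_append)
  with assms(4) show False
    by simp
qed

text \<open>A crossing factor \<open>s @ p\<close> is answered by \<open>s' @ p'\<close>, where \<open>s'\<close> and \<open>p'\<close> answer \<open>s\<close> and
  \<open>p\<close> in the component games; \<open>s'\<close> is a suffix of \<open>v1\<close> and \<open>p'\<close> a prefix of \<open>v2\<close>, so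
  \<open>s' @ p'\<close> is a factor of \<open>v1 @ v2\<close>.\<close>

lemma reply_crossing_factor:
  assumes u: "sublist u (w1 @ w2)" "\<not> sublist u w1" "\<not> sublist u w2"
  shows "\<exists>y\<in>univ (v1 @ v2). simulated_reply (Some u) y"
proof -
  obtain s p where sp: "u = s @ p" "suffix s w1" "prefix p w2"
    using u sublist_append by blast
  obtain s' where s': "sublist s' v1" and reply1: "dup_wins N w1 v1 (A1 @ [Some s]) (B1 @ [Some s'])"
    using dup_wins_pick_factor[OF game1, of s] sp(2) by auto
  obtain p' where p': "sublist p' v2" and reply2: "dup_wins N w2 v2 (A2 @ [Some p]) (B2 @ [Some p'])"
    using dup_wins_pick_factor[OF game2, of p] sp(3) by auto
  define j where "j = N - 2"
  have N: "N = Suc (Suc j)"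
    using enough_rounds unfolding j_def by simp
  have "suffix s' v1"
    using dup_wins_suffix[OF reply1[unfolded N], of "Chosen (length A1)" s] sp(2) length_A1
    by (simp add: nth_append)
  moreover have "prefix p' v2"
    using dup_wins_prefix[OF reply2[unfolded N], of "Chosen (length A2)" p] sp(3) length_A2
    by (simp add: nth_append)
  ultimately have "Some (s' @ p') \<in> univ (v1 @ v2)"
    using sublist_append[of "s' @ p'" v1 v2] by auto
  moreover have "tracked (A1 @ [Some s]) (B1 @ [Some s']) (A2 @ [Some p]) (B2 @ [Some p'])
      (Some (s @ p)) (Some (s' @ p')) (Chosen (length A1)) (Chosen (length A2))"
    using crossing_reply_not_left_factor[OF reply1 reply2 p'] crossing_reply_not_right_factor[OF reply1 reply2 s']
      u sp s' p' length_A1 length_A2 by (simp add: tracked_crossingI nth_append)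
  ultimately show ?thesis
    unfolding simulated_reply_def using reply1 reply2 sp(1) by blast
qed

lemma reply_exists:
  assumes "x \<in> univ (w1 @ w2)"
  shows "\<exists>y\<in>univ (v1 @ v2). simulated_reply x y"
proof (cases x)
  case None
  then show ?thesis
    using reply_None None_in_univ by blast
next
  case (Some u)
  then have u: "sublist u (w1 @ w2)"
    using assms by simp
  consider "sublist u w1" "sublist u w2" | "sublist u w1" "\<not> sublist u w2" | "sublist u w2" "\<not> sublist u w1"
    | "\<not> sublist u w1" "\<not> sublist u w2"
    by blast
  then show ?thesis
  proof cases
    case 1
    then have "sublist u (v1 @ v2)"
      using same_common_factors sublist_order.order_trans sublist_append_rightI by blast
    then show ?thesis
      using reply_common_factor[OF 1] Some by force
  next
    case 2
    then show ?thesis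
      using reply_left_factor Some sublist_order.order_trans sublist_append_rightI
      by (metis Some_in_univ_iff)
  next
    case 3
    then show ?thesis
      using reply_right_factor Some sublist_order.order_trans sublist_append_leftI
      by (metis Some_in_univ_iff)
  next
    case 4
    then show ?thesis
      using reply_crossing_factor u Some by blast
  qed
qed

end

section \<open>Duplicator's strategy\<close>

context concat_games
begin

text \<open>Invariant of Duplicator's strategy: the position \<open>(as, bs)\<close> of the game on the
  concatenations with \<open>n\<close> rounds left is simulated by positions of the component games with
  \<open>n + r + 2\<close> rounds left.  The \<open>r + 2\<close> spare rounds are spent on auxiliary moves that pin down
  short common factors and the whole words.\<close>

definition simulates ::
  "nat \<Rightarrow> 'a list option list \<Rightarrow> 'a list option list \<Rightarrow>
   'a list option list \<Rightarrow> 'a list option list \<Rightarrow> 'a list option list \<Rightarrow> 'a list option list \<Rightarrow> bool" where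
  "simulates n as bs A1 B1 A2 B2 \<longleftrightarrow>
    length A1 = length as \<and> length A2 = length as \<and> length bs = length as \<and>
    dup_wins (n + r + 2) w1 v1 A1 B1 \<and> dup_wins (n + r + 2) w2 v2 A2 B2 \<and>
    (\<forall>i<length as. tracked A1 B1 A2 B2 (as ! i) (bs ! i) (Chosen i) (Chosen i))"

lemma simulates_swap:
  assumes "simulates n as bs A1 B1 A2 B2"
  shows "concat_games.simulates v1 v2 w1 w2 r n bs as B1 A1 B2 A2"
proof -
  have games: "dup_wins (n + r + 2) w1 v1 A1 B1" "dup_wins (n + r + 2) w2 v2 A2 B2"
    using assms by (simp_all add: simulates_def)
  then have "length A1 = length B1" "length A2 = length B2"
    using dup_wins_length by blast+
  with assms games show ?thesis
    unfolding simulates_def concat_games.simulates_def[OF swap]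
    using tracked_swap dup_wins_sym by auto
qed

lemma simulates_step:
  assumes sim: "simulates (Suc n) as bs A1 B1 A2 B2" and x: "x \<in> univ (w1 @ w2)"
  shows "\<exists>y\<in>univ (v1 @ v2). \<exists>a1 b1 a2 b2.
    simulates n (as @ [x]) (bs @ [y]) (A1 @ [a1]) (B1 @ [b1]) (A2 @ [a2]) (B2 @ [b2])"
proof -
  interpret reply_position w1 w2 v1 v2 r "n + r + 2" A1 B1 A2 B2
    using sim by unfold_locales (simp_all add: simulates_def)
  have len: "length A1 = length as" "length A2 = length as" "length bs = length as"
    using sim by (simp_all add: simulates_def)
  obtain y a1 b1 a2 b2 where y: "y \<in> univ (v1 @ v2)"
    and games: "dup_wins (n + r + 2) w1 v1 (A1 @ [a1]) (B1 @ [b1])" "dup_wins (n + r + 2) w2 v2 (A2 @ [a2]) (B2 @ [b2])"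
    and new: "tracked (A1 @ [a1]) (B1 @ [b1]) (A2 @ [a2]) (B2 @ [b2]) x y (Chosen (length as)) (Chosen (length as))"
    using reply_exists[OF x] len unfolding simulated_reply_def by auto
  have "tracked (A1 @ [a1]) (B1 @ [b1]) (A2 @ [a2]) (B2 @ [b2]) ((as @ [x]) ! i) ((bs @ [y]) ! i) (Chosen i) (Chosen i)"
    if "i < length (as @ [x])" for i
  proof (cases "i < length as")
    case True
    then show ?thesis
      using sim tracked_snoc length_A1 length_A2 len by (simp add: simulates_def nth_append)
  next
    case False
    with that have "i = length as"
      by simp
    with new len show ?thesis
      by (simp add: nth_append)
  qed
  with games len have "simulates n (as @ [x]) (bs @ [y]) (A1 @ [a1]) (B1 @ [b1]) (A2 @ [a2]) (B2 @ [b2])"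
    unfolding simulates_def by simp
  with y show ?thesis
    by blast
qed

lemma simulates_dup_wins: "simulates n as bs A1 B1 A2 B2 \<Longrightarrow> dup_wins n (w1 @ w2) (v1 @ v2) as bs"
proof (induction n arbitrary: as bs A1 B1 A2 B2)
  case 0
  interpret final_position w1 w2 v1 v2 r A1 B1 A2 B2
    using "0" by unfold_locales (simp_all add: simulates_def)
  have "\<exists>q1 q2. tracked A1 B1 A2 B2 (pval (w1 @ w2) as q) (pval (v1 @ v2) bs q) q1 q2"
    if "valid_pos (length as) q" for q
  proof (cases q)
    case (Chosen i)
    with that "0" have "tracked A1 B1 A2 B2 (as ! i) (bs ! i) (Chosen i) (Chosen i)"
      by (simp add: simulates_def)
    with Chosen show ?thesis
      by auto
  next
    case (Letter c)
    with tracked_letter[OF game1 game2, of c] show ?thesis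
      by auto
  next
    case Eps
    with tracked_Eps[of A1 B1 A2 B2] show ?thesis
      by auto
  qed
  with "0" show ?case
    by (simp add: composite_partial_iso simulates_def)
next
  case (Suc n)
  interpret swapped: concat_games v1 v2 w1 w2 r
    by (rule swap)
  show ?case
  proof (rule dup_wins_SucI)
    show "\<forall>a\<in>univ (w1 @ w2). \<exists>b\<in>univ (v1 @ v2). dup_wins n (w1 @ w2) (v1 @ v2) (as @ [a]) (bs @ [b])"
      using simulates_step[OF Suc.prems] Suc.IH by blast
    show "\<forall>b\<in>univ (v1 @ v2). \<exists>a\<in>univ (w1 @ w2). dup_wins n (w1 @ w2) (v1 @ v2) (as @ [a]) (bs @ [b])"
      using swapped.simulates_step[OF simulates_swap[OF Suc.prems]] swapped.simulates_swap Suc.IH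
      by blast
  qed
qed

end

lemma finite_Facs: "finite (Facs w)"
  unfolding Facs_def using set_sublists_eq[of w] by (metis List.finite_set)

theorem lemma4p4:
  fixes w1 w2 v1 v2 :: "'a::finite list" and k r :: nat
  assumes "Facs w1 \<inter> Facs w2 = Facs v1 \<inter> Facs v2"
    and "r = Max (length ` (Facs w1 \<inter> Facs w2))"
    and "k \<ge> 1"
    and "ef_equiv w1 (k + r + 2) v1"
    and "ef_equiv w2 (k + r + 2) v2"
  shows "ef_equiv (w1 @ w2) k (v1 @ v2)"
proof -
  interpret concat_games w1 w2 v1 v2 r
  proof
    show "sublist u w1 \<and> sublist u w2 \<longleftrightarrow> sublist u v1 \<and> sublist u v2" for u
      using assms(1) unfolding Facs_def by blast
    show "length u \<le> r" if "sublist u w1" "sublist u w2" for u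
    proof -
      have "length u \<in> length ` (Facs w1 \<inter> Facs w2)"
        using that by (simp add: Facs_def)
      then show ?thesis
        unfolding assms(2) by (rule Max_ge[rotated]) (simp add: finite_Facs)
    qed
  qed
  have "simulates k [] [] [] [] [] []"
    using assms(4,5) by (simp add: simulates_def ef_equiv_def)
  then show ?thesis
    unfolding ef_equiv_def by (rule simulates_dup_wins)
qed

end
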